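(* Let $X$ be a locally compact Hausdorff space, let $p$ be a continuous projection on $X$ and $q\in\mathrm{RP}_{p.w.}(X)$ with $p\le q$ pointwise. Then $q-p\in\mathrm{RP}_{p.w.}(X)$.
   Context: $\mathcal K$ is the compact operators on $\ell_2(\mathbb N)$. A continuous projection on $X$ is a projection in $C_b(X,\mathcal K)$. $\mathrm{RP}_{p.w.}(X)$ is the set of maps $X\to B(\ell_2(\mathbb N))$ of the form $x\mapsto\chi_{(0,\infty)}(a(x))$ (the range projection of $a(x)$) for some $a\in C_0(X,\mathcal K)^+$. *)

theory Defs
  imports "HOL-Analysis.Analysis"
begin

typedef l2 = "{f :: nat \<Rightarrow> complex. summable (\<lambda>n. (cmod (f n))\<^sup>2)}"
  by (rule exI[of _ "\<lambda>_. 0"]) simp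

definition l2_add :: "l2 \<Rightarrow> l2 \<Rightarrow> l2" where
  "l2_add u v = Abs_l2 (\<lambda>n. Rep_l2 u n + Rep_l2 v n)"

definition l2_scale :: "complex \<Rightarrow> l2 \<Rightarrow> l2" where
  "l2_scale c v = Abs_l2 (\<lambda>n. c * Rep_l2 v n)"

definition l2_diff :: "l2 \<Rightarrow> l2 \<Rightarrow> l2" where
  "l2_diff u v = Abs_l2 (\<lambda>n. Rep_l2 u n - Rep_l2 v n)"

definition l2_inner :: "l2 \<Rightarrow> l2 \<Rightarrow> complex" where
  "l2_inner u v = (\<Sum>n. Rep_l2 u n * cnj (Rep_l2 v n))"

definition l2_norm :: "l2 \<Rightarrow> real" where
  "l2_norm v = sqrt (\<Sum>n. (cmod (Rep_l2 v n))\<^sup>2)"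

definition l2_closure :: "l2 set \<Rightarrow> l2 set" where
  "l2_closure S = {v. \<forall>e>0. \<exists>w\<in>S. l2_norm (l2_diff v w) < e}"

type_synonym op = "l2 \<Rightarrow> l2"

definition op_diff :: "op \<Rightarrow> op \<Rightarrow> op" where
  "op_diff S T = (\<lambda>v. l2_diff (S v) (T v))"

definition bounded_op :: "op \<Rightarrow> bool" where
  "bounded_op T \<longleftrightarrow>
     (\<forall>u v. T (l2_add u v) = l2_add (T u) (T v)) \<and>
     (\<forall>c v. T (l2_scale c v) = l2_scale c (T v)) \<and>
     (\<exists>C. \<forall>v. l2_norm (T v) \<le> C * l2_norm v)"

definition op_norm :: "op \<Rightarrow> real" where
  "op_norm T = Sup {l2_norm (T v) | v. l2_norm v \<le> 1}"

text \<open>Compact operator: bounded, and the image of the closed unit ball is totally bounded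
  (i.e. relatively compact, ell_2 being complete).\<close>
definition compact_op :: "op \<Rightarrow> bool" where
  "compact_op T \<longleftrightarrow> bounded_op T \<and>
     (\<forall>e>0. \<exists>F. finite F \<and>
        (\<forall>v. l2_norm v \<le> 1 \<longrightarrow> (\<exists>w\<in>F. l2_norm (l2_diff (T v) w) < e)))"

definition positive_op :: "op \<Rightarrow> bool" where
  "positive_op T \<longleftrightarrow> bounded_op T \<and>
     (\<forall>v. Im (l2_inner (T v) v) = 0 \<and> Re (l2_inner (T v) v) \<ge> 0)"

definition projection_op :: "op \<Rightarrow> bool" where
  "projection_op P \<longleftrightarrow> bounded_op P \<and> (\<forall>v. P (P v) = P v) \<and>
     (\<forall>u v. l2_inner (P u) v = l2_inner u (P v))"

definition is_range_projection :: "op \<Rightarrow> op \<Rightarrow> bool" where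
  "is_range_projection T P \<longleftrightarrow> projection_op P \<and> range P = l2_closure (range T)"

definition op_le :: "op \<Rightarrow> op \<Rightarrow> bool" where
  "op_le S T \<longleftrightarrow> positive_op (op_diff T S)"

definition norm_continuous :: "('a::topological_space \<Rightarrow> op) \<Rightarrow> bool" where
  "norm_continuous f \<longleftrightarrow>
     (\<forall>x e. e > 0 \<longrightarrow> (\<forall>\<^sub>F y in nhds x. op_norm (op_diff (f y) (f x)) < e))"

definition Cb_K :: "('a::topological_space \<Rightarrow> op) set" where
  "Cb_K = {f. (\<forall>x. compact_op (f x)) \<and> norm_continuous f \<and> (\<exists>B. \<forall>x. op_norm (f x) \<le> B)}"

definition C0_K :: "('a::topological_space \<Rightarrow> op) set" where
  "C0_K = {f. (\<forall>x. compact_op (f x)) \<and> norm_continuous f \<and>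
              (\<forall>e>0. \<exists>K. compact K \<and> (\<forall>x. x \<notin> K \<longrightarrow> op_norm (f x) < e))}"

definition C0_K_pos :: "('a::topological_space \<Rightarrow> op) set" where
  "C0_K_pos = {f \<in> C0_K. \<forall>x. positive_op (f x)}"

definition continuous_projection :: "('a::topological_space \<Rightarrow> op) \<Rightarrow> bool" where
  "continuous_projection p \<longleftrightarrow> p \<in> Cb_K \<and> (\<forall>x. projection_op (p x))"

definition RP_pw :: "('a::topological_space \<Rightarrow> op) set" where
  "RP_pw = {q. \<exists>a \<in> C0_K_pos. \<forall>x. is_range_projection (a x) (q x)}"

end

theory Submission
  imports Defs
begin

text \<open>Write \<open>q x\<close> as the range projection of \<open>a x\<close> with \<open>a \<in> C\<^sub>0(X,\<K>)\<^sup>+\<close>. Then \<open>q - p\<close> is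
  pointwise the range projection of the compression \<open>b x = (1 - p x) a x (1 - p x)\<close>.
  Indeed \<open>p \<le> q\<close> forces \<open>pq = qp = p\<close>, so \<open>q - p\<close> is a projection whose range contains the range of
  \<open>b x\<close>. Conversely, a vector \<open>m\<close> in the range of \<open>q x - p x\<close> orthogonal to the range of \<open>b x\<close>
  satisfies \<open>\<langle>a x m, m\<rangle> = \<langle>b x m, m\<rangle> = 0\<close>, so by positivity \<open>m\<close> is orthogonal to the range of
  \<open>a x\<close>, whose closure contains \<open>m\<close>; hence \<open>m = 0\<close>. Compressing by a projection preserves
  compactness and positivity, does not increase the norm and is jointly norm continuous, so
  \<open>b \<in> C\<^sub>0(X,\<K>)\<^sup>+\<close>.\<close>

section \<open>\<open>\<ell>\<^sub>2\<close> as a real Hilbert space\<close>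

lemma l2_summable: "summable (\<lambda>n. (cmod (Rep_l2 v n))\<^sup>2)"
  using Rep_l2[of v] by simp

lemma summable_cmod_square_add:
  fixes f g :: "nat \<Rightarrow> complex"
  assumes "summable (\<lambda>n. (cmod (f n))\<^sup>2)" "summable (\<lambda>n. (cmod (g n))\<^sup>2)"
  shows "summable (\<lambda>n. (cmod (f n + g n))\<^sup>2)"
proof -
  have bound: "norm ((cmod (f n + g n))\<^sup>2) \<le> 2 * (cmod (f n))\<^sup>2 + 2 * (cmod (g n))\<^sup>2" for n
  proof -
    have "(cmod (f n + g n))\<^sup>2 \<le> (cmod (f n) + cmod (g n))\<^sup>2"
      by (simp add: norm_triangle_ineq power_mono)
    also have "\<dots> \<le> 2 * (cmod (f n))\<^sup>2 + 2 * (cmod (g n))\<^sup>2"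
      using sum_squares_bound[of "cmod (f n)" "cmod (g n)"] by (simp add: power2_sum)
    finally show ?thesis by simp
  qed
  have "summable (\<lambda>n. 2 * (cmod (f n))\<^sup>2 + 2 * (cmod (g n))\<^sup>2)"
    using assms by (intro summable_add summable_mult)
  then show ?thesis using bound by (rule summable_comparison_test'[where N = 0])
qed

lemma summable_mult_cnj:
  fixes f g :: "nat \<Rightarrow> complex"
  assumes "summable (\<lambda>n. (cmod (f n))\<^sup>2)" "summable (\<lambda>n. (cmod (g n))\<^sup>2)"
  shows "summable (\<lambda>n. f n * cnj (g n))"
proof (rule summable_norm_cancel)
  have bound: "norm (norm (f n * cnj (g n))) \<le> (cmod (f n))\<^sup>2 + (cmod (g n))\<^sup>2" for n
  proof -
    have "2 * (cmod (f n) * cmod (g n)) \<le> (cmod (f n))\<^sup>2 + (cmod (g n))\<^sup>2"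
      using sum_squares_bound[of "cmod (f n)" "cmod (g n)"] by (simp add: mult.assoc)
    moreover have "0 \<le> cmod (f n) * cmod (g n)" by simp
    ultimately have "cmod (f n) * cmod (g n) \<le> (cmod (f n))\<^sup>2 + (cmod (g n))\<^sup>2" by linarith
    then show ?thesis by (simp add: norm_mult)
  qed
  show "summable (\<lambda>n. norm (f n * cnj (g n)))"
    using summable_add[OF assms] bound by (rule summable_comparison_test'[where N = 0])
qed

lemma Rep_l2_add: "Rep_l2 (l2_add u v) = (\<lambda>n. Rep_l2 u n + Rep_l2 v n)"
  unfolding l2_add_def by (rule Abs_l2_inverse) (simp add: summable_cmod_square_add l2_summable)

lemma Rep_l2_scale: "Rep_l2 (l2_scale c v) = (\<lambda>n. c * Rep_l2 v n)"
  unfolding l2_scale_def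
  by (rule Abs_l2_inverse) (simp add: norm_mult power_mult_distrib summable_mult l2_summable)

lemma Rep_l2_diff: "Rep_l2 (l2_diff u v) = (\<lambda>n. Rep_l2 u n - Rep_l2 v n)"
proof -
  have "summable (\<lambda>n. (cmod (Rep_l2 u n + - Rep_l2 v n))\<^sup>2)"
    by (rule summable_cmod_square_add) (simp_all add: l2_summable)
  then show ?thesis by (simp add: l2_diff_def Abs_l2_inverse)
qed

lemma Rep_l2_zero: "Rep_l2 (Abs_l2 (\<lambda>_. 0)) = (\<lambda>_. 0)"
  by (rule Abs_l2_inverse) simp

lemma l2_eq_iff: "u = v \<longleftrightarrow> (\<forall>n. Rep_l2 u n = Rep_l2 v n)"
  by (metis Rep_l2_inject ext)

lemma summable_l2_inner: "summable (\<lambda>n. Rep_l2 u n * cnj (Rep_l2 v n))"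
  by (rule summable_mult_cnj[OF l2_summable l2_summable])

lemma l2_inner_cnj: "l2_inner v u = cnj (l2_inner u v)"
proof -
  have "(\<lambda>n. cnj (Rep_l2 u n * cnj (Rep_l2 v n))) sums cnj (l2_inner u v)"
    unfolding sums_cnj l2_inner_def using summable_l2_inner by (rule summable_sums)
  then show ?thesis unfolding l2_inner_def by (simp add: mult.commute sums_iff)
qed

lemma l2_inner_add_left: "l2_inner (l2_add u v) w = l2_inner u w + l2_inner v w"
  unfolding l2_inner_def Rep_l2_add
  by (simp add: distrib_right suminf_add[OF summable_l2_inner summable_l2_inner])

lemma l2_inner_scale_left: "l2_inner (l2_scale c u) w = c * l2_inner u w"
  unfolding l2_inner_def Rep_l2_scale
  using suminf_mult[OF summable_l2_inner, of c u w] by (simp add: mult.assoc)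

lemma l2_norm_square: "(l2_norm v)\<^sup>2 = (\<Sum>n. (cmod (Rep_l2 v n))\<^sup>2)"
  by (simp add: l2_norm_def suminf_nonneg[OF l2_summable])

lemma l2_inner_self: "l2_inner v v = complex_of_real ((l2_norm v)\<^sup>2)"
proof -
  have "(\<lambda>n. Rep_l2 v n * cnj (Rep_l2 v n)) = (\<lambda>n. complex_of_real ((cmod (Rep_l2 v n))\<^sup>2))"
    by (rule ext) (metis complex_norm_square)
  then show ?thesis
    unfolding l2_inner_def l2_norm_square by (simp add: suminf_of_real[OF l2_summable])
qed

text \<open>HOL-Analysis has no complex inner product spaces, so \<open>\<ell>\<^sub>2\<close> becomes a real inner product
  space with \<open>Re (l2_inner u v)\<close> as inner product; the complex form is kept for positivity.\<close>
instantiation l2 :: real_inner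
begin

definition zero_l2_def: "0 = Abs_l2 (\<lambda>_. 0)"
definition plus_l2_def: "u + v = l2_add u v"
definition minus_l2_def: "u - v = l2_diff u v"
definition uminus_l2_def: "- v = l2_scale (- 1) v"
definition scaleR_l2_def: "r *\<^sub>R v = l2_scale (complex_of_real r) v"
definition norm_l2_def: "norm v = l2_norm v"
definition dist_l2_def: "dist u v = norm (u - v)" for u v :: l2
definition sgn_l2_def: "sgn v = inverse (norm v) *\<^sub>R v" for v :: l2
definition uniformity_l2_def:
  "(uniformity :: (l2 \<times> l2) filter) = (INF e\<in>{0<..}. principal {(x, y). dist x y < e})"
definition open_l2_def:
  "open (U :: l2 set) = (\<forall>x\<in>U. \<forall>\<^sub>F (x', y) in uniformity. x' = x \<longrightarrow> y \<in> U)"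
definition inner_l2_def: "inner u v = Re (l2_inner u v)"

instance
proof
  fix a b c :: l2 and r s :: real
  show "a + b + c = a + (b + c)" "a + b = b + a" "0 + a = a" "- a + a = 0" "a - b = a + - b"
    "r *\<^sub>R (a + b) = r *\<^sub>R a + r *\<^sub>R b" "(r + s) *\<^sub>R a = r *\<^sub>R a + s *\<^sub>R a"
    "r *\<^sub>R s *\<^sub>R a = (r * s) *\<^sub>R a" "1 *\<^sub>R a = a"
    unfolding plus_l2_def minus_l2_def uminus_l2_def scaleR_l2_def zero_l2_def l2_eq_iff
    by (simp_all add: Rep_l2_add Rep_l2_diff Rep_l2_scale Rep_l2_zero algebra_simps)
  show "inner a b = inner b a"
    unfolding inner_l2_def by (subst l2_inner_cnj) simp
  show "inner (a + b) c = inner a c + inner b c"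
    unfolding inner_l2_def plus_l2_def by (simp add: l2_inner_add_left)
  show "inner (r *\<^sub>R a) b = r * inner a b"
    unfolding inner_l2_def scaleR_l2_def by (simp add: l2_inner_scale_left)
  show "0 \<le> inner a a"
    unfolding inner_l2_def l2_inner_self by simp
  show "norm a = sqrt (inner a a)"
    unfolding inner_l2_def norm_l2_def l2_inner_self
    by (simp add: l2_norm_def suminf_nonneg[OF l2_summable])
  have "l2_norm a = 0 \<longleftrightarrow> (\<forall>n. Rep_l2 a n = 0)"
    unfolding l2_norm_def using suminf_eq_zero_iff[OF l2_summable] by simp
  then show "inner a a = 0 \<longleftrightarrow> a = 0"
    unfolding inner_l2_def l2_inner_self zero_l2_def l2_eq_iff by (simp add: Rep_l2_zero)
qed (rule dist_l2_def sgn_l2_def uniformity_l2_def open_l2_def)+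

end

lemma l2_add_eq_plus [simp]: "l2_add u v = u + v"
  by (simp add: plus_l2_def)

lemma l2_diff_eq_minus [simp]: "l2_diff u v = u - v"
  by (simp add: minus_l2_def)

lemma l2_norm_eq_norm [simp]: "l2_norm v = norm v"
  by (simp add: norm_l2_def)

lemma l2_scale_of_real: "l2_scale (complex_of_real r) v = r *\<^sub>R v"
  by (simp add: scaleR_l2_def)

lemma Rep_l2_minus: "Rep_l2 (u - v) = (\<lambda>n. Rep_l2 u n - Rep_l2 v n)"
  using Rep_l2_diff[of u v] by simp

lemma l2_partial_sum_le_norm: "(\<Sum>n<N. (cmod (Rep_l2 v n))\<^sup>2) \<le> (norm v)\<^sup>2"
proof -
  have "(\<Sum>n<N. (cmod (Rep_l2 v n))\<^sup>2) \<le> (\<Sum>n. (cmod (Rep_l2 v n))\<^sup>2)"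
    by (rule sum_le_suminf[OF l2_summable]) auto
  then show ?thesis using l2_norm_square[of v] by simp
qed

lemma l2_coordinate_le_norm: "cmod (Rep_l2 v n) \<le> norm v"
proof -
  have "(cmod (Rep_l2 v n))\<^sup>2 \<le> (\<Sum>i<Suc n. (cmod (Rep_l2 v i))\<^sup>2)"
    by (rule member_le_sum) auto
  also have "\<dots> \<le> (norm v)\<^sup>2" by (rule l2_partial_sum_le_norm)
  finally show ?thesis by (rule power2_le_imp_le) simp
qed

lemma bounded_linear_l2_coordinate: "bounded_linear (\<lambda>v. Rep_l2 v n)"
proof (rule bounded_linear_intro[where K = 1])
  show "Rep_l2 (u + v) n = Rep_l2 u n + Rep_l2 v n" for u v
    using Rep_l2_add[of u v] by simp
  show "Rep_l2 (r *\<^sub>R v) n = r *\<^sub>R Rep_l2 v n" for r v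
    using Rep_l2_scale[of "complex_of_real r" v] by (simp add: l2_scale_of_real scaleR_conv_of_real)
  show "norm (Rep_l2 v n) \<le> norm v * 1" for v
    using l2_coordinate_le_norm by simp
qed

lemma l2_Cauchy_tail_bound:
  fixes X :: "nat \<Rightarrow> l2"
  assumes close: "\<forall>m\<ge>M. \<forall>k\<ge>M. dist (X m) (X k) < e"
    and lim: "\<And>n. (\<lambda>k. Rep_l2 (X k) n) \<longlonglongrightarrow> g n" and "k \<ge> M"
  shows "summable (\<lambda>n. (cmod (Rep_l2 (X k) n - g n))\<^sup>2)"
    and "(\<Sum>n. (cmod (Rep_l2 (X k) n - g n))\<^sup>2) \<le> e\<^sup>2"
proof -
  have partial: "(\<Sum>n<N. (cmod (Rep_l2 (X k) n - g n))\<^sup>2) \<le> e\<^sup>2" for N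
  proof (rule LIMSEQ_le_const2)
    show "(\<lambda>m. \<Sum>n<N. (cmod (Rep_l2 (X k) n - Rep_l2 (X m) n))\<^sup>2)
        \<longlonglongrightarrow> (\<Sum>n<N. (cmod (Rep_l2 (X k) n - g n))\<^sup>2)"
      by (intro tendsto_intros lim)
    show "\<exists>N'. \<forall>m\<ge>N'. (\<Sum>n<N. (cmod (Rep_l2 (X k) n - Rep_l2 (X m) n))\<^sup>2) \<le> e\<^sup>2"
    proof (intro exI allI impI)
      fix m assume "m \<ge> M"
      have "(\<Sum>n<N. (cmod (Rep_l2 (X k) n - Rep_l2 (X m) n))\<^sup>2) \<le> (norm (X k - X m))\<^sup>2"
        using l2_partial_sum_le_norm[where N = N and v = "X k - X m"] by (simp add: Rep_l2_minus)
      also have "\<dots> \<le> e\<^sup>2"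
        using close \<open>k \<ge> M\<close> \<open>m \<ge> M\<close> by (intro power_mono) (auto simp: dist_norm less_imp_le)
      finally show "(\<Sum>n<N. (cmod (Rep_l2 (X k) n - Rep_l2 (X m) n))\<^sup>2) \<le> e\<^sup>2" .
    qed
  qed
  show summable: "summable (\<lambda>n. (cmod (Rep_l2 (X k) n - g n))\<^sup>2)"
    by (rule summableI_nonneg_bounded[where x = "e\<^sup>2"]) (use partial in auto)
  show "(\<Sum>n. (cmod (Rep_l2 (X k) n - g n))\<^sup>2) \<le> e\<^sup>2"
    by (rule suminf_le_const[OF summable]) (use partial in auto)
qed

instance l2 :: complete_space
proof
  fix X :: "nat \<Rightarrow> l2" assume Cauchy: "Cauchy X"
  define g where "g n = lim (\<lambda>k. Rep_l2 (X k) n)" for n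
  have lim: "(\<lambda>k. Rep_l2 (X k) n) \<longlonglongrightarrow> g n" for n
    unfolding g_def convergent_LIMSEQ_iff[symmetric]
    by (rule Cauchy_convergent[OF bounded_linear.Cauchy[OF bounded_linear_l2_coordinate Cauchy]])
  have tail: "\<exists>M. \<forall>k\<ge>M. summable (\<lambda>n. (cmod (Rep_l2 (X k) n - g n))\<^sup>2) \<and>
      (\<Sum>n. (cmod (Rep_l2 (X k) n - g n))\<^sup>2) \<le> e\<^sup>2" if e_pos: "e > 0" for e
  proof -
    obtain M where M: "\<forall>m\<ge>M. \<forall>k\<ge>M. dist (X m) (X k) < e"
      using metric_CauchyD[OF Cauchy e_pos] by blast
    show ?thesis by (intro exI[of _ M] allI impI conjI l2_Cauchy_tail_bound[OF M lim])
  qed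
  obtain k0 where "summable (\<lambda>n. (cmod (Rep_l2 (X k0) n - g n))\<^sup>2)"
    using tail[of 1] by auto
  then have "summable (\<lambda>n. (cmod (Rep_l2 (X k0) n + - (Rep_l2 (X k0) n - g n)))\<^sup>2)"
    by (intro summable_cmod_square_add l2_summable) (simp add: norm_minus_commute)
  then have Rep_L: "Rep_l2 (Abs_l2 g) = g"
    by (intro Abs_l2_inverse) simp
  have "X \<longlonglongrightarrow> Abs_l2 g"
  proof (rule LIMSEQ_I)
    fix r :: real assume "r > 0"
    then obtain M where M: "\<forall>k\<ge>M. (\<Sum>n. (cmod (Rep_l2 (X k) n - g n))\<^sup>2) \<le> (r / 2)\<^sup>2"
      using tail[of "r / 2"] by auto
    have "norm (X k - Abs_l2 g) < r" if "k \<ge> M" for k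
    proof -
      have "(norm (X k - Abs_l2 g))\<^sup>2 = (\<Sum>n. (cmod (Rep_l2 (X k) n - g n))\<^sup>2)"
        using l2_norm_square[of "X k - Abs_l2 g"] by (simp only: l2_norm_eq_norm Rep_l2_minus Rep_L)
      then have "(norm (X k - Abs_l2 g))\<^sup>2 \<le> (r / 2)\<^sup>2"
        using M that by simp
      then have "norm (X k - Abs_l2 g) \<le> r / 2"
        by (rule power2_le_imp_le) (use \<open>r > 0\<close> in simp)
      then show ?thesis using \<open>r > 0\<close> by simp
    qed
    then show "\<exists>M. \<forall>k\<ge>M. norm (X k - Abs_l2 g) < r" by blast
  qed
  then show "convergent X" by (auto simp: convergent_def)
qed

section \<open>Closest points and orthogonal projections in real Hilbert spaces\<close>

lemma quadratic_nonneg_imp_linear_coeff_zero: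
  fixes c d :: real
  assumes nonneg: "\<And>t. 0 \<le> t * c + t\<^sup>2 * d"
  shows "c = 0"
proof -
  define B where "B = \<bar>d\<bar> + 1"
  have B: "B > 0" "d \<le> B - 1" unfolding B_def by auto
  have "0 \<le> (- c / B) * c + (- c / B)\<^sup>2 * d" by (rule nonneg)
  then have "0 \<le> (- c * c * B + c * c * d) / B\<^sup>2"
    using B by (simp add: field_simps power2_eq_square)
  then have "0 \<le> - c * c * B + c * c * d" using B by (simp add: zero_le_divide_iff)
  also have "\<dots> \<le> - c * c" using B mult_left_mono[OF B(2), of "c * c"] by (simp add: algebra_simps)
  finally have "c * c \<le> 0" by simp
  then show "c = 0" by (simp add: mult_le_0_iff) linarith
qed

lemma orthogonal_if_norm_minimal:
  fixes w s :: "'a::real_inner"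
  assumes "\<And>t::real. norm w \<le> norm (w - t *\<^sub>R s)"
  shows "inner w s = 0"
proof -
  have "0 \<le> t * (- 2 * inner w s) + t\<^sup>2 * inner s s" for t
  proof -
    have "(norm w)\<^sup>2 \<le> (norm (w - t *\<^sub>R s))\<^sup>2" using assms[of t] by (simp add: power_mono)
    also have "(norm (w - t *\<^sub>R s))\<^sup>2 = (norm w)\<^sup>2 - 2 * t * inner w s + t\<^sup>2 * inner s s"
      unfolding power2_norm_eq_inner
      by (simp add: inner_diff_left inner_diff_right inner_commute power2_eq_square algebra_simps)
    finally show ?thesis by (simp add: algebra_simps)
  qed
  then show ?thesis using quadratic_nonneg_imp_linear_coeff_zero by fastforce
qed

text \<open>Parallelogram law for \<open>v - s m\<close> and \<open>v - s n\<close>, using that the midpoint of \<open>s m\<close> and \<open>s n\<close>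
  lies in \<open>S\<close>.\<close>
lemma minimizing_sequence_Cauchy:
  fixes v :: "'a::real_inner"
  assumes "convex S" and s: "\<And>k. s k \<in> S" and dist_ge: "\<And>y. y \<in> S \<Longrightarrow> d \<le> norm (v - y)"
    and lim: "(\<lambda>k. norm (v - s k)) \<longlonglongrightarrow> d"
  shows "Cauchy s"
proof (rule metric_CauchyI)
  fix e :: real assume "e > 0"
  have "0 \<le> d" using LIMSEQ_le_const[OF lim] by simp
  have "(\<lambda>k. (norm (v - s k))\<^sup>2) \<longlonglongrightarrow> d\<^sup>2" using lim by (intro tendsto_intros)
  moreover have "d\<^sup>2 < d\<^sup>2 + e\<^sup>2 / 4" using \<open>e > 0\<close> by simp
  ultimately obtain K where K: "\<And>k. k \<ge> K \<Longrightarrow> (norm (v - s k))\<^sup>2 < d\<^sup>2 + e\<^sup>2 / 4"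
    by (metis (no_types, lifting) eventually_sequentially order_tendstoD(2))
  have "dist (s m) (s n) < e" if "m \<ge> K" "n \<ge> K" for m n
  proof -
    have "(1/2) *\<^sub>R s m + (1/2) *\<^sub>R s n \<in> S"
      using \<open>convex S\<close> s by (intro convexD) auto
    then have "d \<le> norm (v - ((1/2) *\<^sub>R s m + (1/2) *\<^sub>R s n))" by (rule dist_ge)
    also have "\<dots> = norm ((v - s m) + (v - s n)) / 2"
    proof -
      have "(v - s m) + (v - s n) = 2 *\<^sub>R (v - ((1/2) *\<^sub>R s m + (1/2) *\<^sub>R s n))"
        by (simp add: algebra_simps scaleR_2)
      then show ?thesis by simp
    qed
    finally have "(2 * d)\<^sup>2 \<le> (norm ((v - s m) + (v - s n)))\<^sup>2"
      using \<open>0 \<le> d\<close> by (intro power_mono) auto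
    moreover have "(norm (s m - s n))\<^sup>2
        = 2 * (norm (v - s m))\<^sup>2 + 2 * (norm (v - s n))\<^sup>2 - (norm ((v - s m) + (v - s n)))\<^sup>2"
      by (simp add: power2_norm_eq_inner inner_add_left inner_add_right inner_diff_left
          inner_diff_right inner_commute)
    ultimately have "(norm (s m - s n))\<^sup>2 < e\<^sup>2"
      using K[OF \<open>m \<ge> K\<close>] K[OF \<open>n \<ge> K\<close>] by (simp add: power_mult_distrib)
    then show ?thesis using \<open>e > 0\<close> by (simp add: dist_norm power_less_imp_less_base)
  qed
  then show "\<exists>M. \<forall>m\<ge>M. \<forall>n\<ge>M. dist (s m) (s n) < e" by blast
qed

lemma Hilbert_closest_point_exists:
  fixes v :: "'a::{real_inner,complete_space}"
  assumes "closed S" "convex S" "S \<noteq> {}"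
  shows "\<exists>n\<in>S. \<forall>y\<in>S. norm (v - n) \<le> norm (v - y)"
proof -
  define d where "d = infdist v S"
  have dist_ge: "d \<le> norm (v - y)" if "y \<in> S" for y
    unfolding d_def using infdist_le[OF that, of v] by (simp add: dist_norm)
  have "\<exists>y\<in>S. norm (v - y) < d + inverse (Suc k)" for k
  proof -
    have "(INF y\<in>S. dist v y) < d + inverse (Suc k)"
      using infdist_notempty[OF \<open>S \<noteq> {}\<close>] d_def by simp
    then show ?thesis using \<open>S \<noteq> {}\<close>
      by (subst (asm) cINF_less_iff) (auto simp: dist_norm intro: bdd_belowI2[where m = 0])
  qed
  then obtain s where s: "\<And>k. s k \<in> S" and close: "\<And>k. norm (v - s k) < d + inverse (Suc k)"
    by metis
  have lim: "(\<lambda>k. norm (v - s k)) \<longlonglongrightarrow> d"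
  proof (rule tendsto_sandwich[OF _ _ tendsto_const])
    show "\<forall>\<^sub>F k in sequentially. d \<le> norm (v - s k)" using dist_ge s by simp
    show "\<forall>\<^sub>F k in sequentially. norm (v - s k) \<le> d + inverse (Suc k)"
      using close by (simp add: less_imp_le)
    show "(\<lambda>k. d + inverse (real (Suc k))) \<longlonglongrightarrow> d"
      using tendsto_add[OF tendsto_const LIMSEQ_inverse_real_of_nat] by simp
  qed
  obtain n where "s \<longlonglongrightarrow> n"
    using minimizing_sequence_Cauchy[OF \<open>convex S\<close> s dist_ge lim] Cauchy_convergent_iff
    convergent_def by blast
  then have "n \<in> S" and "(\<lambda>k. norm (v - s k)) \<longlonglongrightarrow> norm (v - n)"
    using closed_sequentially[OF \<open>closed S\<close>] s by (blast, intro tendsto_intros)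
  then show ?thesis using LIMSEQ_unique[OF lim] dist_ge by auto
qed

lemma Hilbert_orthogonal_projection_exists:
  fixes v :: "'a::{real_inner,complete_space}"
  assumes "closed S" "subspace S"
  shows "\<exists>n\<in>S. \<forall>y\<in>S. inner (v - n) y = 0"
proof -
  have "S \<noteq> {}" using \<open>subspace S\<close> subspace_0 by blast
  with assms obtain n where "n \<in> S" and closest: "\<forall>y\<in>S. norm (v - n) \<le> norm (v - y)"
    using Hilbert_closest_point_exists subspace_imp_convex by metis
  have "inner (v - n) y = 0" if "y \<in> S" for y
  proof (rule orthogonal_if_norm_minimal)
    fix t :: real
    have "n + t *\<^sub>R y \<in> S" using \<open>subspace S\<close> \<open>n \<in> S\<close> that
      by (intro subspace_add subspace_scale)
    then show "norm (v - n) \<le> norm (v - n - t *\<^sub>R y)"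
      using closest by (simp add: algebra_simps)
  qed
  then show ?thesis using \<open>n \<in> S\<close> by blast
qed

lemma subspace_closure:
  fixes S :: "'a::real_normed_vector set"
  assumes "subspace S"
  shows "subspace (closure S)"
  unfolding subspace_def
proof (intro conjI ballI allI)
  show "0 \<in> closure S" using assms closure_subset subspace_0 by blast
  fix x y assume "x \<in> closure S" "y \<in> closure S"
  then obtain xs ys where "\<forall>n. xs n \<in> S" "xs \<longlonglongrightarrow> x" "\<forall>n. ys n \<in> S" "ys \<longlonglongrightarrow> y"
    by (meson closure_sequential)
  then have "\<forall>n. xs n + ys n \<in> S" "(\<lambda>n. xs n + ys n) \<longlonglongrightarrow> x + y"
    using assms by (auto simp: subspace_add intro: tendsto_add)
  then show "x + y \<in> closure S" by (meson closure_sequential)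
next
  fix c :: real and x assume "x \<in> closure S"
  then obtain xs where "\<forall>n. xs n \<in> S" "xs \<longlonglongrightarrow> x" by (meson closure_sequential)
  then have "\<forall>n. c *\<^sub>R xs n \<in> S" "(\<lambda>n. c *\<^sub>R xs n) \<longlonglongrightarrow> c *\<^sub>R x"
    using assms by (auto simp: subspace_scale intro: tendsto_scaleR)
  then show "c *\<^sub>R x \<in> closure S" by (meson closure_sequential)
qed

lemma Re_l2_inner: "Re (l2_inner u v) = inner u v"
  by (simp add: inner_l2_def)

lemma l2_inner_plus_left: "l2_inner (u + v) w = l2_inner u w + l2_inner v w"
  using l2_inner_add_left[of u v w] by simp

lemma l2_inner_diff_left: "l2_inner (u - v) w = l2_inner u w - l2_inner v w"
  unfolding l2_inner_def Rep_l2_minus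
  by (simp add: left_diff_distrib suminf_diff[OF summable_l2_inner summable_l2_inner])

lemma l2_inner_add_right: "l2_inner w (u + v) = l2_inner w u + l2_inner w v"
  by (metis complex_cnj_add l2_inner_plus_left l2_inner_cnj)

lemma l2_inner_diff_right: "l2_inner w (u - v) = l2_inner w u - l2_inner w v"
  by (metis complex_cnj_diff l2_inner_cnj l2_inner_diff_left)

lemma l2_inner_scale_right: "l2_inner u (l2_scale c v) = cnj c * l2_inner u v"
  by (metis complex_cnj_mult l2_inner_cnj l2_inner_scale_left)

lemma l2_inner_scaleR_left: "l2_inner (r *\<^sub>R u) v = complex_of_real r * l2_inner u v"
  using l2_inner_scale_left[of "complex_of_real r" u v] by (simp add: l2_scale_of_real)

lemma l2_inner_scaleR_right: "l2_inner u (r *\<^sub>R v) = complex_of_real r * l2_inner u v"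
  using l2_inner_scale_right[of u "complex_of_real r" v] by (simp add: l2_scale_of_real)

lemma l2_inner_self_eq_zero_iff: "l2_inner v v = 0 \<longleftrightarrow> v = 0"
  using l2_inner_self[of v] by simp

lemma l2_eq_if_l2_inner_eq: assumes "\<And>w. l2_inner x w = l2_inner y w" shows "x = y"
proof -
  have "l2_inner (x - y) (x - y) = 0" using assms[of "x - y"] by (simp add: l2_inner_diff_left)
  then show ?thesis by (simp add: l2_inner_self_eq_zero_iff)
qed

lemma l2_inner_eq_zero_iff: "l2_inner u v = 0 \<longleftrightarrow> inner u v = 0 \<and> Im (l2_inner u v) = 0"
  by (simp add: complex_eq_iff Re_l2_inner)

lemma l2_closure_eq_closure: "l2_closure S = closure S"
  by (rule set_eqI) (simp add: l2_closure_def closure_approachable dist_norm norm_minus_commute)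

lemma bounded_op_add: "bounded_op T \<Longrightarrow> T (u + v) = T u + T v"
  by (simp add: bounded_op_def)

lemma bounded_op_scale: "bounded_op T \<Longrightarrow> T (l2_scale c v) = l2_scale c (T v)"
  unfolding bounded_op_def by blast

lemma bounded_op_scaleR: "bounded_op T \<Longrightarrow> T (r *\<^sub>R v) = r *\<^sub>R T v"
  using bounded_op_scale[of T "complex_of_real r" v] by (simp add: l2_scale_of_real)

lemma bounded_op_bounded_linear: "bounded_op T \<Longrightarrow> bounded_linear T"
proof -
  assume T: "bounded_op T"
  then obtain C where C: "\<forall>v. norm (T v) \<le> C * norm v" unfolding bounded_op_def by auto
  show ?thesis
  proof (rule bounded_linear_intro[where K = C])
    show "T (x + y) = T x + T y" for x y using T by (rule bounded_op_add)
    show "T (r *\<^sub>R x) = r *\<^sub>R T x" for r x using T by (rule bounded_op_scaleR)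
    show "norm (T x) \<le> norm x * C" for x using C by (simp add: mult.commute)
  qed
qed

lemma bounded_op_diff: "bounded_op T \<Longrightarrow> T (u - v) = T u - T v"
  by (simp add: bounded_op_bounded_linear linear_diff bounded_linear.linear)

lemma bounded_op_zero: "bounded_op T \<Longrightarrow> T 0 = 0"
  by (simp add: bounded_op_bounded_linear linear_0 bounded_linear.linear)

lemma bdd_above_op_norm_set: "bounded_op T \<Longrightarrow> bdd_above {norm (T v) | v. norm v \<le> 1}"
proof -
  assume "bounded_op T"
  then obtain K where K: "\<And>v. norm (T v) \<le> norm v * K" "K > 0"
    using bounded_linear.pos_bounded[OF bounded_op_bounded_linear] by blast
  have "norm (T v) \<le> K" if "norm v \<le> 1" for v
    using K(1)[of v] mult_right_mono[OF that less_imp_le[OF K(2)]] by simp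
  then show ?thesis by (intro bdd_aboveI[where M = K]) auto
qed

lemma op_norm_ge_unit: "bounded_op T \<Longrightarrow> norm v \<le> 1 \<Longrightarrow> norm (T v) \<le> op_norm T"
  unfolding op_norm_def by (auto intro!: cSup_upper bdd_above_op_norm_set)

lemma op_norm_nonneg: "bounded_op T \<Longrightarrow> 0 \<le> op_norm T"
  using op_norm_ge_unit[of T 0] bounded_op_zero[of T] by simp

lemma op_norm_bound: "bounded_op T \<Longrightarrow> norm (T v) \<le> op_norm T * norm v"
proof -
  assume T: "bounded_op T"
  note unit = op_norm_ge_unit[OF T]
  show ?thesis
  proof (cases "v = 0")
    case True then show ?thesis using bounded_op_zero[OF T] by simp
  next
    case False
    have "norm (T (inverse (norm v) *\<^sub>R v)) \<le> op_norm T" using False by (intro unit) simp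
    then show ?thesis using False by (simp add: bounded_op_scaleR[OF T] field_simps)
  qed
qed

lemma op_norm_le: assumes "0 \<le> C" "\<And>v. norm (T v) \<le> C * norm v" shows "op_norm T \<le> C"
  unfolding op_norm_def
proof (rule cSup_least)
  show "{l2_norm (T v) |v. l2_norm v \<le> 1} \<noteq> {}" by (auto intro: exI[of _ 0])
  have "norm (T v) \<le> C" if "norm v \<le> 1" for v
    using assms(2)[of v] mult_left_mono[OF that assms(1)] by simp
  then show "y \<le> C" if "y \<in> {l2_norm (T v) |v. l2_norm v \<le> 1}" for y using that by auto
qed

lemma op_norm_le_imp_bound:
  "bounded_op T \<Longrightarrow> op_norm T \<le> \<delta> \<Longrightarrow> norm (T v) \<le> \<delta> * norm v"
  by (meson mult_right_mono norm_ge_zero op_norm_bound order_trans)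

lemma bounded_op_comp:
  assumes "bounded_op S" "bounded_op T" shows "bounded_op (\<lambda>v. S (T v))"
  unfolding bounded_op_def
proof (intro conjI allI exI)
  show "S (T (l2_add u v)) = l2_add (S (T u)) (S (T v))" for u v
    using assms by (simp add: bounded_op_add)
  show "S (T (l2_scale c v)) = l2_scale c (S (T v))" for c v
    using assms by (simp add: bounded_op_scale)
  show "l2_norm (S (T v)) \<le> (op_norm S * op_norm T) * l2_norm v" for v
    using order_trans[OF op_norm_bound[OF assms(1), of "T v"]
        mult_left_mono[OF op_norm_bound[OF assms(2)] op_norm_nonneg[OF assms(1)]]]
    by (simp add: mult.assoc)
qed

lemma bounded_op_op_diff:
  assumes "bounded_op S" "bounded_op T" shows "bounded_op (op_diff S T)"
  unfolding bounded_op_def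
proof (intro conjI allI exI)
  show "op_diff S T (l2_add u v) = l2_add (op_diff S T u) (op_diff S T v)" for u v
    using assms by (simp add: op_diff_def bounded_op_add algebra_simps)
  show "op_diff S T (l2_scale c v) = l2_scale c (op_diff S T v)" for c v
    using assms by (simp add: op_diff_def bounded_op_scale l2_eq_iff Rep_l2_minus Rep_l2_scale
        right_diff_distrib)
  show "l2_norm (op_diff S T v) \<le> (op_norm S + op_norm T) * l2_norm v" for v
    using norm_triangle_ineq4[of "S v" "T v"] op_norm_bound[OF assms(1), of v]
      op_norm_bound[OF assms(2), of v]
    by (simp add: op_diff_def algebra_simps)
qed

lemma bounded_op_id: "bounded_op (\<lambda>v. v)"
  unfolding bounded_op_def by (auto intro: exI[of _ 1])

lemma subspace_range_bounded_op: "bounded_op T \<Longrightarrow> subspace (range T)"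
  by (metis bounded_op_bounded_linear bounded_linear.linear linear_subspace_image subspace_UNIV)

section \<open>Orthogonal projections\<close>

lemma projection_op_bounded: "projection_op P \<Longrightarrow> bounded_op P"
  by (simp add: projection_op_def)

lemma projection_op_idem: "projection_op P \<Longrightarrow> P (P v) = P v"
  by (simp add: projection_op_def)

lemma projection_op_adjoint: "projection_op P \<Longrightarrow> l2_inner (P u) v = l2_inner u (P v)"
  by (simp add: projection_op_def)

lemma projection_op_norm_square: "projection_op P \<Longrightarrow> (norm (P v))\<^sup>2 = inner (P v) v"
  by (metis Re_l2_inner power2_norm_eq_inner projection_op_adjoint projection_op_idem)

lemma projection_op_norm_le: assumes "projection_op P" shows "norm (P v) \<le> norm v"
proof -
  have "norm (P v) * norm (P v) \<le> norm (P v) * norm v"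
    using projection_op_norm_square[OF assms, of v] norm_cauchy_schwarz[of "P v" v]
    by (simp add: power2_eq_square)
  then show ?thesis
    by (cases "P v = 0") (auto simp: mult_le_cancel_left)
qed

definition compl_op :: "op \<Rightarrow> op" where
  "compl_op P = (\<lambda>v. v - P v)"

lemma projection_op_compl: assumes "projection_op P" shows "projection_op (compl_op P)"
  unfolding projection_op_def
proof (intro conjI allI)
  have "bounded_op (op_diff (\<lambda>v. v) P)"
    using bounded_op_id projection_op_bounded[OF assms] by (rule bounded_op_op_diff)
  then show "bounded_op (compl_op P)" by (simp add: op_diff_def compl_op_def)
  show "compl_op P (compl_op P v) = compl_op P v" for v
    using bounded_op_diff[OF projection_op_bounded[OF assms]] projection_op_idem[OF assms]
    by (simp add: compl_op_def)
  show "l2_inner (compl_op P u) v = l2_inner u (compl_op P v)" for u v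
    by (simp add: compl_op_def l2_inner_diff_left l2_inner_diff_right projection_op_adjoint[OF assms])
qed

lemma closed_range_projection_op: assumes "projection_op P" shows "closed (range P)"
proof -
  have "range P = {v. P v = v}"
  proof
    show "range P \<subseteq> {v. P v = v}" using projection_op_idem[OF assms] by auto
    show "{v. P v = v} \<subseteq> range P"
    proof
      fix v assume "v \<in> {v. P v = v}"
      then have "v = P v" by simp
      then show "v \<in> range P" by (rule range_eqI)
    qed
  qed
  moreover have "continuous_on UNIV P"
    using assms by (simp add: linear_continuous_on projection_op_bounded bounded_op_bounded_linear)
  ultimately show ?thesis by (simp add: closed_Collect_eq continuous_on_id)
qed

text \<open>For projections, \<open>p \<le> q\<close> means \<open>\<langle>(q - p) y, y\<rangle> \<ge> 0\<close>; at \<open>y = p v\<close> this reads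
  \<open>\<parallel>q y\<parallel>\<^sup>2 \<ge> \<parallel>y\<parallel>\<^sup>2\<close>, which together with \<open>\<parallel>y - q y\<parallel>\<^sup>2 = \<parallel>y\<parallel>\<^sup>2 - \<parallel>q y\<parallel>\<^sup>2\<close> forces \<open>q y = y\<close>.\<close>
lemma projection_op_le_fixes:
  assumes p: "projection_op p" and q: "projection_op q" and le: "op_le p q"
  shows "q (p v) = p v"
proof -
  define y where "y = p v"
  have "0 \<le> Re (l2_inner (op_diff q p y) y)" using le unfolding op_le_def positive_op_def by blast
  then have "inner y y \<le> inner (q y) y"
    using projection_op_idem[OF p] by (simp add: y_def op_diff_def Re_l2_inner inner_diff_left)
  moreover have "inner (q y) y = inner (q y) (q y)"
    using projection_op_norm_square[OF q, of y] by (simp add: power2_norm_eq_inner)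
  ultimately have "inner (y - q y) (y - q y) \<le> 0"
    by (simp add: inner_diff_left inner_diff_right inner_commute)
  then have "y - q y = 0" by (meson inner_eq_zero_iff inner_ge_zero order_antisym)
  then show ?thesis by (simp add: y_def)
qed

lemma projection_op_le_absorbs:
  assumes p: "projection_op p" and q: "projection_op q" and le: "op_le p q"
  shows "p (q v) = p v"
proof (rule l2_eq_if_l2_inner_eq)
  fix w
  have "l2_inner (p (q v)) w = l2_inner v (q (p w))"
    by (simp add: projection_op_adjoint[OF p] projection_op_adjoint[OF q])
  also have "\<dots> = l2_inner (p v) w"
    by (simp add: projection_op_le_fixes[OF assms] projection_op_adjoint[OF p])
  finally show "l2_inner (p (q v)) w = l2_inner (p v) w" .
qed

lemma projection_op_diff_fixed:
  assumes p: "projection_op p" and q: "projection_op q" and le: "op_le p q"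
    and fixed: "op_diff q p m = m"
  shows "p m = 0" and "q m = m"
proof -
  note p_diff = bounded_op_diff[OF projection_op_bounded[OF p]]
    and q_diff = bounded_op_diff[OF projection_op_bounded[OF q]]
  have "p m = p (q m - p m)" using fixed by (simp add: op_diff_def)
  also have "\<dots> = 0"
    using p_diff projection_op_le_absorbs[OF p q le] projection_op_idem[OF p] by simp
  finally show "p m = 0" .
  have "q m = q (q m - p m)" using fixed by (simp add: op_diff_def)
  also have "\<dots> = op_diff q p m"
    using q_diff projection_op_le_fixes[OF p q le] projection_op_idem[OF q] by (simp add: op_diff_def)
  finally show "q m = m" using fixed by simp
qed

lemma projection_op_diff_if_le:
  assumes p: "projection_op p" and q: "projection_op q" and le: "op_le p q"
  shows "projection_op (op_diff q p)"
  unfolding projection_op_def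
proof (intro conjI allI)
  show "bounded_op (op_diff q p)"
    using projection_op_bounded[OF q] projection_op_bounded[OF p] by (rule bounded_op_op_diff)
  show "op_diff q p (op_diff q p v) = op_diff q p v" for v
    using bounded_op_diff[OF projection_op_bounded[OF q]] bounded_op_diff[OF projection_op_bounded[OF p]]
      projection_op_idem[OF p] projection_op_idem[OF q]
      projection_op_le_fixes[OF assms] projection_op_le_absorbs[OF assms]
    by (simp add: op_diff_def)
  show "l2_inner (op_diff q p u) v = l2_inner u (op_diff q p v)" for u v
    by (simp add: op_diff_def l2_inner_diff_left l2_inner_diff_right
        projection_op_adjoint[OF p] projection_op_adjoint[OF q])
qed

lemma compact_op_bounded: "compact_op T \<Longrightarrow> bounded_op T"
  by (simp add: compact_op_def)

lemma compact_op_comp_left: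
  assumes T: "compact_op T" and S: "bounded_op S" shows "compact_op (\<lambda>v. S (T v))"
  unfolding compact_op_def
proof (intro conjI allI impI)
  show "bounded_op (\<lambda>v. S (T v))" using S compact_op_bounded[OF T] by (rule bounded_op_comp)
  fix e :: real assume "e > 0"
  define K where "K = op_norm S + 1"
  have "K > 0" unfolding K_def using op_norm_nonneg[OF S] by simp
  then have "e / K > 0" using \<open>e > 0\<close> by simp
  then obtain F where F: "finite F" "\<forall>v. norm v \<le> 1 \<longrightarrow> (\<exists>w\<in>F. norm (T v - w) < e / K)"
    using T unfolding compact_op_def by auto
  have "\<exists>w\<in>S ` F. norm (S (T v) - w) < e" if v: "norm v \<le> 1" for v
  proof -
    obtain w where w: "w \<in> F" "norm (T v - w) < e / K" using F(2) v by auto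
    have "norm (S (T v) - S w) \<le> op_norm S * norm (T v - w)"
      using op_norm_bound[OF S, of "T v - w"] bounded_op_diff[OF S] by simp
    also have "\<dots> \<le> K * norm (T v - w)" unfolding K_def by (simp add: mult_right_mono)
    also have "\<dots> < e" using w(2) \<open>K > 0\<close> by (simp add: field_simps)
    finally show ?thesis using w(1) by blast
  qed
  then show "\<exists>F. finite F \<and> (\<forall>v. l2_norm v \<le> 1 \<longrightarrow> (\<exists>w\<in>F. l2_norm (l2_diff (S (T v)) w) < e))"
    using F(1) by (intro exI[of _ "S ` F"]) auto
qed

lemma compact_op_comp_right_contraction:
  assumes T: "compact_op T" and S: "bounded_op S" and contr: "\<And>v. norm (S v) \<le> norm v"
  shows "compact_op (\<lambda>v. T (S v))"
  unfolding compact_op_def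
proof (intro conjI allI impI)
  show "bounded_op (\<lambda>v. T (S v))" using compact_op_bounded[OF T] S by (rule bounded_op_comp)
  fix e :: real assume "e > 0"
  then obtain F where F: "finite F" "\<forall>v. norm v \<le> 1 \<longrightarrow> (\<exists>w\<in>F. norm (T v - w) < e)"
    using T unfolding compact_op_def by auto
  have "\<exists>w\<in>F. norm (T (S v) - w) < e" if "norm v \<le> 1" for v
  proof -
    have "norm (S v) \<le> 1" using contr[of v] that by linarith
    then show ?thesis using F(2) by auto
  qed
  then show "\<exists>F. finite F \<and> (\<forall>v. l2_norm v \<le> 1 \<longrightarrow> (\<exists>w\<in>F. l2_norm (l2_diff (T (S v)) w) < e))"
    using F(1) by auto
qed

lemma positive_op_bounded: "positive_op A \<Longrightarrow> bounded_op A"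
  by (simp add: positive_op_def)

text \<open>Expanding \<open>\<langle>A(m + t y), m + t y\<rangle> \<ge> 0\<close> for real \<open>t\<close> kills the real part of
  \<open>\<langle>A m, y\<rangle> + \<langle>A y, m\<rangle>\<close>; replacing \<open>y\<close> by \<open>i y\<close> separates the two terms.\<close>
lemma positive_op_isotropic_orthogonal:
  assumes pos: "positive_op A" and zero: "l2_inner (A m) m = 0"
  shows "l2_inner (A w) m = 0"
proof -
  have A: "bounded_op A" using pos by (rule positive_op_bounded)
  have form: "Im (l2_inner (A v) v) = 0 \<and> 0 \<le> Re (l2_inner (A v) v)" for v
    using pos by (simp add: positive_op_def)
  have sum_zero: "l2_inner (A m) y + l2_inner (A y) m = 0" for y
  proof -
    define c where "c = l2_inner (A m) y + l2_inner (A y) m"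
    define d where "d = l2_inner (A y) y"
    have expand: "l2_inner (A (m + t *\<^sub>R y)) (m + t *\<^sub>R y)
        = complex_of_real t * c + complex_of_real (t\<^sup>2) * d" for t
      using zero by (simp add: c_def d_def bounded_op_add[OF A] bounded_op_scaleR[OF A]
          l2_inner_plus_left l2_inner_add_right l2_inner_scaleR_left l2_inner_scaleR_right
          algebra_simps power2_eq_square)
    have "Im d = 0" using form[of y] by (simp add: d_def)
    then have "Im c = 0" using form[of "m + 1 *\<^sub>R y"] unfolding expand by simp
    moreover have "Re c = 0"
    proof (rule quadratic_nonneg_imp_linear_coeff_zero[where d = "Re d"])
      show "0 \<le> t * Re c + t\<^sup>2 * Re d" for t using form[of "m + t *\<^sub>R y"] unfolding expand by simp
    qed
    ultimately show ?thesis by (simp add: c_def complex_eq_iff)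
  qed
  have "l2_inner (A m) w + l2_inner (A w) m = 0" by (rule sum_zero)
  moreover have "l2_inner (A m) (l2_scale \<i> w) + l2_inner (A (l2_scale \<i> w)) m = 0" by (rule sum_zero)
  then have "- \<i> * l2_inner (A m) w + \<i> * l2_inner (A w) m = 0"
    by (simp add: bounded_op_scale[OF A] l2_inner_scale_right l2_inner_scale_left)
  ultimately show ?thesis by (simp add: algebra_simps)
qed

section \<open>Compression by the complement of a projection\<close>

definition compression :: "op \<Rightarrow> op \<Rightarrow> op" where
  "compression p a = (\<lambda>v. compl_op p (a (compl_op p v)))"

lemma bounded_op_compression:
  assumes "projection_op p" "bounded_op a" shows "bounded_op (compression p a)"
proof -
  have P: "bounded_op (compl_op p)" using projection_op_compl[OF assms(1)] by (rule projection_op_bounded)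
  show ?thesis unfolding compression_def by (rule bounded_op_comp[OF P bounded_op_comp[OF assms(2) P]])
qed

lemma compact_op_compression:
  assumes "projection_op p" "compact_op a" shows "compact_op (compression p a)"
proof -
  have P: "projection_op (compl_op p)" using assms(1) by (rule projection_op_compl)
  have "compact_op (\<lambda>v. a (compl_op p v))"
    using assms(2) projection_op_bounded[OF P] projection_op_norm_le[OF P]
    by (rule compact_op_comp_right_contraction)
  then show ?thesis unfolding compression_def by (rule compact_op_comp_left[OF _ projection_op_bounded[OF P]])
qed

lemma op_norm_compression_le:
  assumes "projection_op p" "bounded_op a" shows "op_norm (compression p a) \<le> op_norm a"
proof (rule op_norm_le[OF op_norm_nonneg[OF assms(2)]])
  fix v
  have P: "projection_op (compl_op p)" using assms(1) by (rule projection_op_compl)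
  have "norm (compression p a v) \<le> norm (a (compl_op p v))"
    unfolding compression_def by (rule projection_op_norm_le[OF P])
  also have "\<dots> \<le> op_norm a * norm (compl_op p v)" using assms(2) by (rule op_norm_bound)
  also have "\<dots> \<le> op_norm a * norm v"
    using projection_op_norm_le[OF P] op_norm_nonneg[OF assms(2)] by (rule mult_left_mono)
  finally show "norm (compression p a v) \<le> op_norm a * norm v" .
qed

lemma l2_inner_compression:
  assumes "projection_op p"
  shows "l2_inner (compression p a v) v = l2_inner (a (compl_op p v)) (compl_op p v)"
  unfolding compression_def using projection_op_adjoint[OF projection_op_compl[OF assms]] by simp

lemma positive_op_compression:
  assumes "projection_op p" "positive_op a" shows "positive_op (compression p a)"
  unfolding positive_op_def
proof (intro conjI allI)
  show "bounded_op (compression p a)"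
    using assms(1) positive_op_bounded[OF assms(2)] by (rule bounded_op_compression)
  show "Im (l2_inner (compression p a v) v) = 0" "0 \<le> Re (l2_inner (compression p a v) v)" for v
    using assms(2) unfolding positive_op_def l2_inner_compression[OF assms(1)] by blast+
qed

text \<open>With \<open>P = 1 - p\<close>: \<open>P' a' P' - P a P = P' a' (P' - P) + P' (a' - a) P + (P' - P) a P\<close>.\<close>
lemma compression_diff_bound:
  assumes p: "projection_op p" and p': "projection_op p'" and a: "bounded_op a" and a': "bounded_op a'"
    and dp: "\<And>z. norm (p' z - p z) \<le> \<delta> * norm z" and da: "\<And>z. norm (a' z - a z) \<le> \<delta> * norm z"
    and "0 \<le> \<delta>"
  shows "norm (compression p' a' v - compression p a v) \<le> \<delta> * (2 * op_norm a + \<delta> + 1) * norm v"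
proof -
  define P P' where "P = compl_op p" and "P' = compl_op p'"
  have "projection_op P" "projection_op P'"
    unfolding P_def P'_def using p p' by (auto intro: projection_op_compl)
  note P_le = projection_op_norm_le[OF this(1)] and P'_le = projection_op_norm_le[OF this(2)]
  note P'_diff = bounded_op_diff[OF projection_op_bounded[OF \<open>projection_op P'\<close>]]
  define A where "A = op_norm a"
  have "0 \<le> A" unfolding A_def using a by (rule op_norm_nonneg)
  have a_le: "norm (a z) \<le> A * norm z" for z unfolding A_def using a by (rule op_norm_bound)
  have dP: "norm (P' z - P z) \<le> \<delta> * norm z" for z
    using dp[of z] by (simp add: P_def P'_def compl_op_def norm_minus_commute)
  have t1: "norm (P' (a' (P' v - P v))) \<le> (A + \<delta>) * (\<delta> * norm v)"
  proof -
    have "norm (P' (a' (P' v - P v))) \<le> norm (a (P' v - P v)) + norm (a' (P' v - P v) - a (P' v - P v))"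
      using P'_le[of "a' (P' v - P v)"] norm_triangle_sub[of "a' (P' v - P v)" "a (P' v - P v)"]
      by linarith
    also have "\<dots> \<le> (A + \<delta>) * norm (P' v - P v)"
      using a_le da by (simp add: distrib_right add_mono)
    also have "\<dots> \<le> (A + \<delta>) * (\<delta> * norm v)"
      using dP \<open>0 \<le> A\<close> \<open>0 \<le> \<delta>\<close> by (intro mult_left_mono) auto
    finally show ?thesis .
  qed
  have t2: "norm (P' (a' (P v) - a (P v))) \<le> \<delta> * norm v"
    by (rule order_trans[OF P'_le order_trans[OF da mult_left_mono[OF P_le \<open>0 \<le> \<delta>\<close>]]])
  have t3: "norm (P' (a (P v)) - P (a (P v))) \<le> \<delta> * (A * norm v)"
    by (rule order_trans[OF dP mult_left_mono[OF order_trans[OF a_le mult_left_mono[OF P_le \<open>0 \<le> A\<close>]]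
          \<open>0 \<le> \<delta>\<close>]])
  have "compression p' a' v - compression p a v
      = P' (a' (P' v - P v)) + P' (a' (P v) - a (P v)) + (P' (a (P v)) - P (a (P v)))"
    unfolding compression_def P_def[symmetric] P'_def[symmetric]
    by (simp only: P'_diff bounded_op_diff[OF a']) (simp add: algebra_simps)
  also have "norm \<dots> \<le> (A + \<delta>) * (\<delta> * norm v) + \<delta> * norm v + \<delta> * (A * norm v)"
    using t1 t2 t3
      norm_triangle_ineq[of "P' (a' (P' v - P v)) + P' (a' (P v) - a (P v))" "P' (a (P v)) - P (a (P v))"]
      norm_triangle_ineq[of "P' (a' (P' v - P v))" "P' (a' (P v) - a (P v))"] by linarith
  finally show ?thesis by (simp add: A_def algebra_simps)
qed

lemma range_compression_subset:
  assumes p: "projection_op p" and q: "projection_op q" and le: "op_le p q"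
    and a_q: "range a \<subseteq> range q"
  shows "range (compression p a) \<subseteq> range (op_diff q p)"
proof
  fix y assume "y \<in> range (compression p a)"
  then obtain v where y: "y = compl_op p (a (compl_op p v))" unfolding compression_def by auto
  obtain u where "a (compl_op p v) = q u" using a_q by blast
  then have "y = op_diff q p u"
    using projection_op_le_absorbs[OF p q le] by (simp add: y compl_op_def op_diff_def)
  then show "y \<in> range (op_diff q p)" by simp
qed

lemma orthogonal_range_compression_eq_zero:
  assumes p: "projection_op p" and a: "positive_op a"
    and m_a: "m \<in> closure (range a)" and "p m = 0" and orth: "\<And>v. inner (compression p a v) m = 0"
  shows "m = 0"
proof -
  have "l2_inner (compression p a m) m = 0"
    using orth[of m] positive_op_compression[OF p a] unfolding positive_op_def
    by (simp add: l2_inner_eq_zero_iff inner_commute)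
  then have "l2_inner (a m) m = 0"
    using \<open>p m = 0\<close> by (simp add: l2_inner_compression[OF p] compl_op_def)
  then have "range a \<subseteq> {y. inner y m = 0}"
    using positive_op_isotropic_orthogonal[OF a] by (auto simp flip: Re_l2_inner)
  moreover have "closed {y. inner y m = 0}"
    by (intro closed_Collect_eq continuous_intros)
  ultimately have "inner m m = 0" using m_a closure_minimal by blast
  then show ?thesis by simp
qed

lemma is_range_projection_compression:
  assumes p: "projection_op p" and a: "positive_op a" and q: "is_range_projection a q"
    and le: "op_le p q"
  shows "is_range_projection (compression p a) (op_diff q p)"
proof -
  have "projection_op q" and range_q: "range q = closure (range a)"
    using q by (auto simp: is_range_projection_def l2_closure_eq_closure)
  define r where "r = op_diff q p"
  have r: "projection_op r" unfolding r_def using p \<open>projection_op q\<close> le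
    by (rule projection_op_diff_if_le)
  define N where "N = closure (range (compression p a))"
  have "range a \<subseteq> range q" using range_q closure_subset[of "range a"] by simp
  then have "range (compression p a) \<subseteq> range r"
    unfolding r_def using p \<open>projection_op q\<close> le by (intro range_compression_subset)
  then have N_r: "N \<subseteq> range r"
    unfolding N_def using closed_range_projection_op[OF r] by (rule closure_minimal)
  have "closed N" unfolding N_def by simp
  moreover have "subspace N"
    unfolding N_def using bounded_op_compression[OF p positive_op_bounded[OF a]]
    by (intro subspace_closure subspace_range_bounded_op)
  ultimately have decompose: "\<exists>n\<in>N. \<forall>y\<in>N. inner (v - n) y = 0" for v
    by (rule Hilbert_orthogonal_projection_exists)
  have "v \<in> N" if "v \<in> range r" for v
  proof -
    obtain n where "n \<in> N" and orth: "\<forall>y\<in>N. inner (v - n) y = 0" using decompose by blast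
    obtain x y where "v = r x" "n = r y" using \<open>v \<in> range r\<close> \<open>n \<in> N\<close> N_r by blast
    then have "op_diff q p (v - n) = v - n"
      using projection_op_idem[OF r] bounded_op_diff[OF projection_op_bounded[OF r]] by (simp add: r_def)
    then have "p (v - n) = 0" and q_fixed: "q (v - n) = v - n"
      using projection_op_diff_fixed[OF p \<open>projection_op q\<close> le] by auto
    moreover have "v - n \<in> closure (range a)"
      using rangeI[of q "v - n"] unfolding q_fixed range_q .
    moreover have "inner (compression p a w) (v - n) = 0" for w
    proof -
      have "compression p a w \<in> N" unfolding N_def by (rule subsetD[OF closure_subset]) simp
      then show ?thesis using orth inner_commute by metis
    qed
    ultimately have "v - n = 0"
      using orthogonal_range_compression_eq_zero[OF p a] by blast
    then show ?thesis using \<open>n \<in> N\<close> by simp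
  qed
  with N_r have "range r = N" by blast
  then show ?thesis
    using r unfolding is_range_projection_def r_def N_def by (simp add: l2_closure_eq_closure)
qed

lemma norm_continuous_compression:
  assumes p_cont: "norm_continuous p" and a_cont: "norm_continuous a"
    and p: "\<And>x. projection_op (p x)" and a: "\<And>x. bounded_op (a x)"
  shows "norm_continuous (\<lambda>x. compression (p x) (a x))"
  unfolding norm_continuous_def
proof (intro allI impI)
  fix x and e :: real assume "e > 0"
  define A where "A = op_norm (a x)"
  have "0 \<le> A" unfolding A_def using a by (rule op_norm_nonneg)
  define \<delta> where "\<delta> = min 1 (e / (2 * A + 3))"
  have "0 < \<delta>" "\<delta> \<le> 1" unfolding \<delta>_def using \<open>e > 0\<close> \<open>0 \<le> A\<close> by simp_all
  have "\<delta> \<le> e / (2 * A + 3)" unfolding \<delta>_def by simp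
  then have "\<delta> * (2 * A + 3) \<le> e" using \<open>0 \<le> A\<close> by (simp add: pos_le_divide_eq)
  have "\<forall>\<^sub>F y in nhds x. op_norm (op_diff (p y) (p x)) < \<delta> \<and> op_norm (op_diff (a y) (a x)) < \<delta>"
    using p_cont a_cont \<open>0 < \<delta>\<close> unfolding norm_continuous_def by (intro eventually_conj) simp_all
  then show "\<forall>\<^sub>F y in nhds x.
      op_norm (op_diff (compression (p y) (a y)) (compression (p x) (a x))) < e"
  proof (rule eventually_mono)
    fix y assume close: "op_norm (op_diff (p y) (p x)) < \<delta> \<and> op_norm (op_diff (a y) (a x)) < \<delta>"
    have "op_norm (op_diff (compression (p y) (a y)) (compression (p x) (a x)))
        \<le> \<delta> * (2 * A + \<delta> + 1)"
    proof (rule op_norm_le)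
      show "0 \<le> \<delta> * (2 * A + \<delta> + 1)" using \<open>0 < \<delta>\<close> \<open>0 \<le> A\<close> by simp
      show "norm (op_diff (compression (p y) (a y)) (compression (p x) (a x)) v)
          \<le> \<delta> * (2 * A + \<delta> + 1) * norm v" for v
        unfolding A_def op_diff_def l2_diff_eq_minus
      proof (rule compression_diff_bound[OF p p a a _ _ less_imp_le[OF \<open>0 < \<delta>\<close>]])
        show "norm (p y z - p x z) \<le> \<delta> * norm z" for z
          using op_norm_le_imp_bound[OF bounded_op_op_diff[OF projection_op_bounded[OF p]
                projection_op_bounded[OF p]]] close by (simp add: op_diff_def)
        show "norm (a y z - a x z) \<le> \<delta> * norm z" for z
          using op_norm_le_imp_bound[OF bounded_op_op_diff[OF a a]] close by (simp add: op_diff_def)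
      qed
    qed
    also have "\<dots> \<le> \<delta> * (2 * A + 2)" using \<open>\<delta> \<le> 1\<close> \<open>0 < \<delta>\<close> by (intro mult_left_mono) auto
    also have "\<dots> < e" using \<open>0 < \<delta>\<close> \<open>\<delta> * (2 * A + 3) \<le> e\<close> by (simp add: algebra_simps)
    finally show "op_norm (op_diff (compression (p y) (a y)) (compression (p x) (a x))) < e" .
  qed
qed

lemma compression_in_C0_K_pos:
  assumes p: "continuous_projection p" and a: "a \<in> C0_K_pos"
  shows "(\<lambda>x. compression (p x) (a x)) \<in> C0_K_pos"
proof -
  have p_proj: "\<And>x. projection_op (p x)" and "norm_continuous p"
    using p unfolding continuous_projection_def Cb_K_def by auto
  have a_pos: "\<And>x. positive_op (a x)" and a_comp: "\<And>x. compact_op (a x)" and "norm_continuous a"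
    and a_vanish: "\<And>e. e > 0 \<Longrightarrow> \<exists>K. compact K \<and> (\<forall>x. x \<notin> K \<longrightarrow> op_norm (a x) < e)"
    using a unfolding C0_K_pos_def C0_K_def by auto
  have "\<exists>K. compact K \<and> (\<forall>x. x \<notin> K \<longrightarrow> op_norm (compression (p x) (a x)) < e)" if "e > 0" for e
    using a_vanish[OF that] op_norm_compression_le[OF p_proj positive_op_bounded[OF a_pos]]
    by (meson le_less_trans)
  moreover have "norm_continuous (\<lambda>x. compression (p x) (a x))"
    using \<open>norm_continuous p\<close> \<open>norm_continuous a\<close> p_proj positive_op_bounded[OF a_pos]
    by (rule norm_continuous_compression)
  ultimately show ?thesis
    unfolding C0_K_pos_def C0_K_def
    using compact_op_compression[OF p_proj a_comp] positive_op_compression[OF p_proj a_pos] by blast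
qed

theorem proposition2p9:
  fixes p q :: "'a::t2_space \<Rightarrow> op"
  assumes "locally_compact_space (euclidean :: 'a topology)"
    and "continuous_projection p"
    and "q \<in> RP_pw"
    and "\<forall>x. op_le (p x) (q x)"
  shows "(\<lambda>x. op_diff (q x) (p x)) \<in> RP_pw"
proof -
  obtain a where a: "a \<in> C0_K_pos" and q: "\<And>x. is_range_projection (a x) (q x)"
    using assms(3) unfolding RP_pw_def by auto
  have "is_range_projection (compression (p x) (a x)) (op_diff (q x) (p x))" for x
  proof (rule is_range_projection_compression[OF _ _ q])
    show "projection_op (p x)" using assms(2) by (simp add: continuous_projection_def)
    show "positive_op (a x)" using a by (simp add: C0_K_pos_def)
    show "op_le (p x) (q x)" using assms(4) by simp
  qed
  moreover have "(\<lambda>x. compression (p x) (a x)) \<in> C0_K_pos"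
    using assms(2) a by (rule compression_in_C0_K_pos)
  ultimately show ?thesis
    unfolding RP_pw_def by (auto intro!: bexI[of _ "\<lambda>x. compression (p x) (a x)"])
qed

end
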